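(* Let $K\subseteq\mathbb{R}^d$ be a topologically regular compact set. Assume that for every $x\in\partial K$ there are $C_x>0$ and a neighbourhood $V_x$ of $x$ such that every $y\in V_x\cap K$ can be joined to $x$ by a rectifiable path in $\mathring K\cup\{x,y\}$ of length at most $C_x|x-y|$. Then $C^1_{\mathrm{int}}(K)=C^1(K)$; i.e., for every $f\in C^1_{\mathrm{int}}(K)$, the continuous extension of $f$ to $K$ belongs to $C^1(K)$ with the continuous extension of its derivative as a continuous derivative on $K$ (and conversely every $f\in C^1(K)$ restricts to an element of $C^1_{\mathrm{int}}(K)$).
   Context: $K$ is topologically regular if it is the closure of its interior $\mathring K$. $C^1_{\mathrm{int}}(K)$ is the set of $f\in C^1(\mathring K)$ such that $f$ and its derivative $df$ extend continuously to $K$. $C^1(K)$ is the set of $f:K\to\mathbb{R}$ admitting a continuous $df:K\to\mathbb{R}^d$ with $\lim_{y\to x,\,y\in K\setminus\{x\}}\frac{f(y)-f(x)-\langle df(x),y-x\rangle}{|y-x|}=0$ for all $x\in K$. A rectifiable path is a continuous map $\gamma:[a,b]\to\mathbb{R}^d$ of finite length $\sup\sum_j|\gamma(t_j)-\gamma(t_{j-1})|$. *)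

theory Defs
  imports "HOL-Analysis.Analysis"
begin

definition partition_sums :: "(real \<Rightarrow> 'a::real_normed_vector) \<Rightarrow> real \<Rightarrow> real \<Rightarrow> real set" where
  "partition_sums \<gamma> a b =
     {(\<Sum>j\<in>{1..n}. norm (\<gamma> (t j) - \<gamma> (t (j - 1)))) | n t.
        t 0 = a \<and> t n = b \<and> (\<forall>j<n. t j \<le> t (Suc j))}"

definition path_length :: "(real \<Rightarrow> 'a::real_normed_vector) \<Rightarrow> real \<Rightarrow> real \<Rightarrow> real" where
  "path_length \<gamma> a b = Sup (partition_sums \<gamma> a b)"

definition rectifiable_path :: "(real \<Rightarrow> 'a::real_normed_vector) \<Rightarrow> real \<Rightarrow> real \<Rightarrow> bool" where
  "rectifiable_path \<gamma> a b \<longleftrightarrow> a \<le> b \<and> continuous_on {a..b} \<gamma> \<and> bdd_above (partition_sums \<gamma> a b)"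

definition topologically_regular :: "'a::topological_space set \<Rightarrow> bool" where
  "topologically_regular K \<longleftrightarrow> closure (interior K) = K"

text \<open>f (defined on K) together with df : K \<rightarrow> R^d represent an element of
  C^1_int(K): f is C^1 on the interior with gradient df there, and f, df are
  continuous on K (i.e. they are the continuous extensions to K).\<close>
definition C1_int :: "'a::euclidean_space set \<Rightarrow> ('a \<Rightarrow> real) \<Rightarrow> ('a \<Rightarrow> 'a) \<Rightarrow> bool" where
  "C1_int K f df \<longleftrightarrow>
     (\<forall>x\<in>interior K. (f has_derivative (\<lambda>h. df x \<bullet> h)) (at x)) \<and>
     continuous_on (interior K) df \<and>
     continuous_on K f \<and> continuous_on K df"

definition C1_on :: "'a::euclidean_space set \<Rightarrow> ('a \<Rightarrow> real) \<Rightarrow> ('a \<Rightarrow> 'a) \<Rightarrow> bool" where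
  "C1_on K f df \<longleftrightarrow>
     continuous_on K df \<and>
     (\<forall>x\<in>K. ((\<lambda>y. (f y - f x - df x \<bullet> (y - x)) / norm (y - x)) \<longlongrightarrow> 0) (at x within K))"

end

theory Submission
  imports Defs
begin

text \<open>At interior points both notions are ordinary differentiability. At a boundary point \<open>x\<close>,
  subtract the linear part: \<open>g z = f z - df x \<bullet> z\<close> has gradient \<open>df z - df x\<close>, which is small near
  \<open>x\<close> by continuity of \<open>df\<close>. A mean value inequality along a short rectifiable path from \<open>x\<close>
  to \<open>y\<close> through the interior -- proved on compact subarcs avoiding the endpoints and extended
  by continuity of \<open>f\<close> -- bounds \<open>\<bar>g y - g x\<bar>\<close> by \<open>sup \<bar>df - df x\<bar>\<close> times the path length
  \<open>\<le> C \<bar>x - y\<bar>\<close>, which is the first-order Whitney estimate at \<open>x\<close>.\<close>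

lemma partition_sums_lessThanI:
  assumes "t 0 = a" "t n = b" "\<forall>j<n. t j \<le> t (Suc j)"
  shows "(\<Sum>j<n. norm (\<gamma> (t (Suc j)) - \<gamma> (t j))) \<in> partition_sums \<gamma> a b"
proof -
  have "(\<Sum>j\<in>{1..n}. norm (\<gamma> (t j) - \<gamma> (t (j - 1)))) \<in> partition_sums \<gamma> a b"
    using assms unfolding partition_sums_def by blast
  then show ?thesis
    using sum.atLeast1_atMost_eq[of "\<lambda>j. norm (\<gamma> (t j) - \<gamma> (t (j - 1)))" n] by simp
qed

lemma partition_sum_le_path_length:
  assumes rp: "rectifiable_path \<gamma> a b" and "a \<le> u" "v \<le> b"
    and "t 0 = u" "t n = v" and t_mono: "\<forall>j<n. t j \<le> t (Suc j)"
  shows "(\<Sum>j<n. norm (\<gamma> (t (Suc j)) - \<gamma> (t j))) \<le> path_length \<gamma> a b"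
proof -
  define p where "p k = (if k = 0 then a else if k = n + 2 then b else t (k - 1))" for k
  let ?d = "\<lambda>k. norm (\<gamma> (p (Suc k)) - \<gamma> (p k))"
  have p_mono: "\<forall>k<n + 2. p k \<le> p (Suc k)"
  proof (intro allI impI)
    fix k assume "k < n + 2"
    then consider "k = 0" | "k = n + 1" | "0 < k" "k \<le> n" by linarith
    then show "p k \<le> p (Suc k)"
    proof cases
      case 3
      then show ?thesis
        using t_mono[rule_format, of "k - 1"] by (simp add: p_def)
    qed (use assms in \<open>auto simp: p_def\<close>)
  qed
  have "(\<Sum>j<n. norm (\<gamma> (t (Suc j)) - \<gamma> (t j))) = (\<Sum>j<n. ?d (Suc j))"
    by (rule sum.cong) (auto simp: p_def)
  also have "\<dots> \<le> ?d 0 + (\<Sum>j<n. ?d (Suc j)) + ?d (Suc n)"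
    by simp
  also have "\<dots> = (\<Sum>k<n + 2. ?d k)"
    by (subst add_2_eq_Suc', subst sum.lessThan_Suc, subst sum.lessThan_Suc_shift) simp
  also have "\<dots> \<le> path_length \<gamma> a b"
    using rp partition_sums_lessThanI[of p a "n + 2" b \<gamma>] p_mono
    unfolding path_length_def rectifiable_path_def by (intro cSup_upper) (auto simp: p_def)
  finally show ?thesis .
qed

lemma norm_le_path_length:
  assumes "rectifiable_path \<gamma> a b" "a \<le> u" "u \<le> v" "v \<le> b"
  shows "norm (\<gamma> v - \<gamma> u) \<le> path_length \<gamma> a b"
  using partition_sum_le_path_length[OF assms(1,2,4), of "\<lambda>j. if j = 0 then u else v" 1] assms(3)
  by simp

lemma fine_partition_exists:
  fixes \<gamma> :: "real \<Rightarrow> 'a::metric_space"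
  assumes uc: "uniformly_continuous_on {u..v} \<gamma>" and uv: "u \<le> v" and e: "e > 0"
  obtains n t where "t 0 = u" "t n = v" "\<forall>j<n. t j \<le> t (Suc j)" "\<forall>j\<le>n. t j \<in> {u..v}"
    "\<forall>j<n. dist (\<gamma> (t (Suc j))) (\<gamma> (t j)) < e"
proof -
  obtain \<rho> where \<rho>: "\<rho> > 0"
    "\<And>s t. s \<in> {u..v} \<Longrightarrow> t \<in> {u..v} \<Longrightarrow> dist s t < \<rho> \<Longrightarrow> dist (\<gamma> s) (\<gamma> t) < e"
    using uc e unfolding uniformly_continuous_on_def by metis
  obtain n :: nat where n: "(v - u) / \<rho> < real n"
    using reals_Archimedean2 by blast
  moreover have "0 \<le> (v - u) / \<rho>"
    using uv \<rho>(1) by simp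
  ultimately have n0: "n > 0"
    by linarith
  define h where "h = (v - u) / real n"
  have h: "0 \<le> h" "h < \<rho>"
    using n n0 uv \<rho>(1) by (auto simp: h_def field_simps)
  define t where "t j = u + real j * h" for j
  have t_in: "t j \<in> {u..v}" if "j \<le> n" for j
  proof -
    have "real j * h \<le> real n * h"
      using that h by (intro mult_right_mono) auto
    then show ?thesis
      using n0 h uv by (auto simp: t_def h_def)
  qed
  show ?thesis
  proof
    show "t 0 = u" "t n = v"
      using n0 by (auto simp: t_def h_def)
    show "\<forall>j<n. t j \<le> t (Suc j)" "\<forall>j\<le>n. t j \<in> {u..v}"
      using h t_in by (auto simp: t_def distrib_right)
    show "\<forall>j<n. dist (\<gamma> (t (Suc j))) (\<gamma> (t j)) < e"
    proof (intro allI impI)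
      fix j assume "j < n"
      moreover have "dist (t (Suc j)) (t j) < \<rho>"
        using h by (simp add: t_def distrib_right dist_real_def)
      ultimately show "dist (\<gamma> (t (Suc j))) (\<gamma> (t j)) < e"
        using t_in[of j] t_in[of "Suc j"] by (intro \<rho>(2)) auto
    qed
  qed
qed

lemma differentiable_bound_along_subpath:
  fixes \<gamma> :: "real \<Rightarrow> 'a::real_normed_vector" and g :: "'a \<Rightarrow> real"
  assumes rp: "rectifiable_path \<gamma> a b" and "a \<le> u" "u \<le> v" "v \<le> b"
    and img: "\<gamma> ` {u..v} \<subseteq> U" and "open U"
    and der: "\<And>z. z \<in> U \<Longrightarrow> (g has_derivative g' z) (at z)"
    and bd: "\<And>z. z \<in> U \<Longrightarrow> onorm (g' z) \<le> B" and "0 \<le> B"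
  shows "\<bar>g (\<gamma> v) - g (\<gamma> u)\<bar> \<le> B * path_length \<gamma> a b"
proof -
  have cont: "continuous_on {u..v} \<gamma>"
    using rp assms(2,4) unfolding rectifiable_path_def by (auto intro: continuous_on_subset)
  have "compact (\<gamma> ` {u..v})"
    using cont by (intro compact_continuous_image) auto
  then obtain e where "0 < e" and e: "\<And>z. z \<in> \<gamma> ` {u..v} \<Longrightarrow> ball z e \<subseteq> U"
    using Heine_Borel_lemma[of "\<gamma> ` {u..v}" "{U}"] img \<open>open U\<close> by auto
  obtain n t where t: "t 0 = u" "t n = v" "\<forall>j<n. t j \<le> t (Suc j)" "\<forall>j\<le>n. t j \<in> {u..v}"
    and t_fine: "\<forall>j<n. dist (\<gamma> (t (Suc j))) (\<gamma> (t j)) < e"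
    by (rule fine_partition_exists[OF compact_uniformly_continuous[OF cont] \<open>u \<le> v\<close> \<open>0 < e\<close>]) auto
  have step: "\<bar>g (\<gamma> (t (Suc j))) - g (\<gamma> (t j))\<bar> \<le> B * norm (\<gamma> (t (Suc j)) - \<gamma> (t j))"
    if "j < n" for j
  proof -
    let ?S = "ball (\<gamma> (t j)) e"
    have "?S \<subseteq> U"
      using e t(4) \<open>j < n\<close> by auto
    then have "(g has_derivative g' z) (at z within ?S)" "onorm (g' z) \<le> B" if "z \<in> ?S" for z
      using der bd that by (blast intro: has_derivative_at_withinI)+
    moreover have "\<gamma> (t (Suc j)) \<in> ?S"
      using t_fine \<open>j < n\<close> by (simp add: dist_commute)
    ultimately have "norm (g (\<gamma> (t (Suc j))) - g (\<gamma> (t j))) \<le> B * norm (\<gamma> (t (Suc j)) - \<gamma> (t j))"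
      using \<open>0 < e\<close> by (intro differentiable_bound[of ?S g g']) auto
    then show ?thesis
      by simp
  qed
  have "\<bar>g (\<gamma> v) - g (\<gamma> u)\<bar> = \<bar>\<Sum>j<n. g (\<gamma> (t (Suc j))) - g (\<gamma> (t j))\<bar>"
    using sum_lessThan_telescope[of "\<lambda>j. g (\<gamma> (t j))" n] t(1,2) by simp
  also have "\<dots> \<le> (\<Sum>j<n. B * norm (\<gamma> (t (Suc j)) - \<gamma> (t j)))"
    using step by (intro order_trans[OF sum_abs] sum_mono) auto
  also have "\<dots> \<le> B * path_length \<gamma> a b"
    unfolding sum_distrib_left[symmetric]
    using partition_sum_le_path_length[OF rp assms(2,4) t(1-3)] \<open>0 \<le> B\<close>
    by (rule mult_left_mono)
  finally show ?thesis .
qed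

lemma last_departure_first_arrival:
  fixes \<gamma> :: "real \<Rightarrow> 'a::t1_space"
  assumes cont: "continuous_on {a..b} \<gamma>" and "a \<le> b" "\<gamma> a = x" "\<gamma> b = y" "x \<noteq> y"
  obtains s0 s1 where "a \<le> s0" "s0 < s1" "s1 \<le> b" "\<gamma> s0 = x" "\<gamma> s1 = y"
    "\<And>t. t \<in> {s0<..<s1} \<Longrightarrow> \<gamma> t \<noteq> x \<and> \<gamma> t \<noteq> y"
proof -
  define T0 where "T0 = {t \<in> {a..b}. \<gamma> t = x}"
  have "closed T0"
    unfolding T0_def by (rule continuous_closed_preimage_constant[OF cont]) simp
  moreover have "bdd_above T0" "a \<in> T0"
    using assms unfolding T0_def by (auto intro: bdd_aboveI[of _ b])
  ultimately have T0: "closed T0" "bdd_above T0" "a \<in> T0" .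
  define s0 where "s0 = Sup T0"
  have "s0 \<in> T0"
    unfolding s0_def using closed_contains_Sup T0 by blast
  then have s0: "a \<le> s0" "s0 \<le> b" "\<gamma> s0 = x"
    by (auto simp: T0_def)
  define T1 where "T1 = {t \<in> {s0..b}. \<gamma> t = y}"
  have "closed T1"
    unfolding T1_def using s0
    by (intro continuous_closed_preimage_constant continuous_on_subset[OF cont]) auto
  moreover have "bdd_below T1" "b \<in> T1"
    using assms s0 unfolding T1_def by (auto intro: bdd_belowI[of _ s0])
  ultimately have T1: "closed T1" "bdd_below T1" "b \<in> T1" .
  define s1 where "s1 = Inf T1"
  have "s1 \<in> T1"
    unfolding s1_def using closed_contains_Inf T1 by blast
  then have s1: "s0 \<le> s1" "s1 \<le> b" "\<gamma> s1 = y"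
    by (auto simp: T1_def)
  show ?thesis
  proof
    show "s0 < s1"
      using s0 s1 \<open>x \<noteq> y\<close> by (cases "s0 = s1") auto
    fix t assume t: "t \<in> {s0<..<s1}"
    have "t \<notin> T0"
      using cSup_upper[of t T0] T0(2) t unfolding s0_def by auto
    moreover have "t \<notin> T1"
      using cInf_lower[of t T1] T1(2) t unfolding s1_def by auto
    ultimately show "\<gamma> t \<noteq> x \<and> \<gamma> t \<noteq> y"
      using t s0 s1 by (auto simp: T0_def T1_def)
  qed (use s0 s1 in auto)
qed

lemma differentiable_bound_along_path:
  fixes \<gamma> :: "real \<Rightarrow> 'a::real_normed_vector" and g :: "'a \<Rightarrow> real"
  assumes rp: "rectifiable_path \<gamma> a b" and "\<gamma> a = x" "\<gamma> b = y" "x \<noteq> y"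
    and img: "\<gamma> ` {a..b} \<subseteq> U \<union> {x, y}" and "open U"
    and gc: "continuous_on {a..b} (g \<circ> \<gamma>)"
    and der: "\<And>z. z \<in> U \<Longrightarrow> (g has_derivative g' z) (at z)"
    and bd: "\<And>z. z \<in> U \<Longrightarrow> onorm (g' z) \<le> B" and "0 \<le> B"
  shows "\<bar>g y - g x\<bar> \<le> B * path_length \<gamma> a b"
proof -
  obtain s0 s1 where s: "a \<le> s0" "s0 < s1" "s1 \<le> b" "\<gamma> s0 = x" "\<gamma> s1 = y"
    and avoid: "\<And>t. t \<in> {s0<..<s1} \<Longrightarrow> \<gamma> t \<noteq> x \<and> \<gamma> t \<noteq> y"
    using last_departure_first_arrival[of a b \<gamma> x y] rp assms(2-4)
    unfolding rectifiable_path_def by blast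
  have "\<gamma> t \<in> U" if "t \<in> {s0<..<s1}" for t
  proof -
    have "t \<in> {a..b}"
      using that s(1,3) by auto
    then have "\<gamma> t \<in> U \<union> {x, y}"
      using img by blast
    then show ?thesis
      using avoid[OF that] by blast
  qed
  then have "\<gamma> ` {s0<..<s1} \<subseteq> U"
    by blast
  define d where "d = (s1 - s0) / 2"
  define F where "F \<tau> = \<bar>g (\<gamma> (s1 - \<tau>)) - g (\<gamma> (s0 + \<tau>))\<bar>" for \<tau>
  \<comment> \<open>Shrinking the parameter interval keeps the path inside \<open>U\<close>; let the margin \<open>\<tau>\<close> tend to \<open>0\<close>.\<close>
  have "F \<tau> \<le> B * path_length \<gamma> a b" if "\<tau> \<in> {0<..d}" for \<tau>
    unfolding F_def
  proof (rule differentiable_bound_along_subpath[OF rp _ _ _ _ \<open>open U\<close> der bd \<open>0 \<le> B\<close>])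
    show "\<gamma> ` {s0 + \<tau>..s1 - \<tau>} \<subseteq> U"
      using \<open>\<gamma> ` {s0<..<s1} \<subseteq> U\<close> that by (force simp: d_def)
  qed (use s that in \<open>auto simp: d_def\<close>)
  then have "{0<..d} \<subseteq> {\<tau> \<in> {0..d}. F \<tau> \<le> B * path_length \<gamma> a b}"
    by auto
  moreover have "continuous_on {0..d} F"
    unfolding F_def using s
    by (intro continuous_intros continuous_on_compose2[OF gc[unfolded comp_def]])
      (auto simp: d_def field_simps)
  then have "closed {\<tau> \<in> {0..d}. F \<tau> \<le> B * path_length \<gamma> a b}"
    by (intro continuous_on_closed_Collect_le) auto
  ultimately have "closure {0<..d} \<subseteq> {\<tau> \<in> {0..d}. F \<tau> \<le> B * path_length \<gamma> a b}"
    by (rule closure_minimal)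
  moreover have "0 < d"
    using s by (simp add: d_def)
  ultimately have "F 0 \<le> B * path_length \<gamma> a b"
    by (auto dest: subsetD[of _ _ 0])
  then show ?thesis
    using s by (simp add: F_def)
qed

definition joinable_through_interior :: "'a::real_normed_vector set \<Rightarrow> 'a \<Rightarrow> 'a \<Rightarrow> real \<Rightarrow> bool" where
  "joinable_through_interior K x y L \<longleftrightarrow>
     (\<exists>\<gamma> a b. rectifiable_path \<gamma> a b \<and> \<gamma> a = x \<and> \<gamma> b = y \<and>
        \<gamma> ` {a..b} \<subseteq> interior K \<union> {x, y} \<and> path_length \<gamma> a b \<le> L)"

lemma has_derivative_inner_iff_remainder:
  fixes f :: "'a::real_inner \<Rightarrow> real"
  shows "(f has_derivative (\<lambda>h. w \<bullet> h)) (at x within S) \<longleftrightarrow>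
    ((\<lambda>y. (f y - f x - w \<bullet> (y - x)) / norm (y - x)) \<longlongrightarrow> 0) (at x within S)"
proof -
  have eq: "(\<lambda>y. norm (f y - f x - w \<bullet> (y - x)) / norm (y - x)) =
      (\<lambda>y. \<bar>(f y - f x - w \<bullet> (y - x)) / norm (y - x)\<bar>)"
    by (simp add: abs_divide)
  show ?thesis
    unfolding has_derivative_iff_norm eq tendsto_rabs_zero_iff
    by (simp add: bounded_linear_inner_right)
qed

lemma C1_on_iff_has_derivative_within:
  "C1_on K f df \<longleftrightarrow>
    continuous_on K df \<and> (\<forall>x\<in>K. (f has_derivative (\<lambda>h. df x \<bullet> h)) (at x within K))"
  by (simp add: C1_on_def has_derivative_inner_iff_remainder)

lemma C1_on_imp_C1_int:
  assumes "C1_on K f df"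
  shows "C1_int K f df"
proof -
  have dfc: "continuous_on K df" and der: "\<forall>x\<in>K. (f has_derivative (\<lambda>h. df x \<bullet> h)) (at x within K)"
    using assms by (auto simp: C1_on_iff_has_derivative_within)
  then have "continuous_on K f"
    by (auto simp: continuous_on_eq_continuous_within intro: has_derivative_continuous)
  moreover have "(f has_derivative (\<lambda>h. df x \<bullet> h)) (at x)" if "x \<in> interior K" for x
    using der that interior_subset at_within_interior[OF that] by fastforce
  ultimately show ?thesis
    using dfc continuous_on_subset[OF dfc interior_subset] by (simp add: C1_int_def)
qed

lemma remainder_le_path_length:
  fixes f :: "'a::real_inner \<Rightarrow> real"
  assumes der: "\<forall>z\<in>interior K. (f has_derivative (\<lambda>h. df z \<bullet> h)) (at z)"
    and fc: "continuous_on K f" and "x \<in> K" "y \<in> K" "x \<noteq> y"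
    and rp: "rectifiable_path \<gamma> a b" and "\<gamma> a = x" "\<gamma> b = y"
    and img: "\<gamma> ` {a..b} \<subseteq> interior K \<union> {x, y}"
    and short: "path_length \<gamma> a b < r"
    and df_close: "\<forall>z\<in>interior K \<inter> ball x r. norm (df z - df x) \<le> B" and "0 \<le> B"
  shows "\<bar>f y - f x - df x \<bullet> (y - x)\<bar> \<le> B * path_length \<gamma> a b"
proof -
  define g where "g z = f z - df x \<bullet> z" for z
  define U where "U = interior K \<inter> ball x r"
  have "dist x (\<gamma> t) \<le> path_length \<gamma> a b" if "t \<in> {a..b}" for t
    using norm_le_path_length[OF rp, of a t] that \<open>\<gamma> a = x\<close> by (simp add: dist_norm norm_minus_commute)
  then have "\<gamma> ` {a..b} \<subseteq> cball x (path_length \<gamma> a b)"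
    by auto
  then have "\<gamma> ` {a..b} \<subseteq> U \<union> {x, y}"
    using img short by (fastforce simp: U_def)
  moreover have "open U"
    by (simp add: U_def open_Int)
  moreover have "continuous_on {a..b} (g \<circ> \<gamma>)"
    using rp img interior_subset \<open>x \<in> K\<close> \<open>y \<in> K\<close> unfolding g_def rectifiable_path_def
    by (intro continuous_on_compose continuous_intros continuous_on_subset[OF fc]) auto
  moreover have "(g has_derivative (\<lambda>h. (df z - df x) \<bullet> h)) (at z)" if "z \<in> U" for z
    using der that unfolding g_def U_def inner_diff_left
    by (auto intro!: derivative_eq_intros)
  moreover have "onorm (\<lambda>h. (df z - df x) \<bullet> h) \<le> B" if "z \<in> U" for z
  proof -
    have "onorm (\<lambda>h. (df z - df x) \<bullet> h) \<le> norm (df z - df x)"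
      by (rule onorm_bound) (auto simp: Cauchy_Schwarz_ineq2)
    then show ?thesis
      using df_close that unfolding U_def by (meson order_trans)
  qed
  ultimately have "\<bar>g y - g x\<bar> \<le> B * path_length \<gamma> a b"
    using \<open>0 \<le> B\<close> by (rule differentiable_bound_along_path[OF rp \<open>\<gamma> a = x\<close> \<open>\<gamma> b = y\<close> \<open>x \<noteq> y\<close>])
  then show ?thesis
    by (simp add: g_def inner_diff_right)
qed

lemma has_derivative_within_by_short_paths:
  fixes f :: "'a::euclidean_space \<Rightarrow> real"
  assumes C1: "C1_int K f df" and "x \<in> K" "C > 0" "open V" "x \<in> V"
    and paths: "\<forall>y\<in>V \<inter> K. joinable_through_interior K x y (C * norm (x - y))"
  shows "(f has_derivative (\<lambda>h. df x \<bullet> h)) (at x within K)"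
  unfolding has_derivative_inner_iff_remainder Lim_within
proof (intro allI impI)
  fix \<epsilon> :: real assume "\<epsilon> > 0"
  define B where "B = \<epsilon> / (2 * C)"
  have "B > 0"
    using \<open>\<epsilon> > 0\<close> \<open>C > 0\<close> by (simp add: B_def)
  have "continuous_on K df"
    using C1 by (simp add: C1_int_def)
  then have "\<exists>\<delta>>0. \<forall>z\<in>K. dist z x < \<delta> \<longrightarrow> dist (df z) (df x) < B"
    using \<open>x \<in> K\<close> \<open>B > 0\<close> unfolding continuous_on_iff by blast
  then obtain \<delta> where "\<delta> > 0" and \<delta>: "\<forall>z\<in>K. dist z x < \<delta> \<longrightarrow> dist (df z) (df x) < B"
    by blast
  obtain r where "r > 0" "ball x r \<subseteq> V"
    using \<open>open V\<close> \<open>x \<in> V\<close> open_contains_ball by blast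
  define d where "d = min r (\<delta> / (2 * C))"
  have "d > 0"
    using \<open>r > 0\<close> \<open>\<delta> > 0\<close> \<open>C > 0\<close> by (simp add: d_def)
  moreover have "\<bar>(f y - f x - df x \<bullet> (y - x)) / norm (y - x)\<bar> < \<epsilon>"
    if "y \<in> K" "0 < dist y x" "dist y x < d" for y
  proof -
    have "y \<in> V"
      using \<open>ball x r \<subseteq> V\<close> that by (auto simp: d_def dist_commute)
    then have "joinable_through_interior K x y (C * norm (x - y))"
      using paths \<open>y \<in> K\<close> by blast
    then obtain \<gamma> a b where \<gamma>: "rectifiable_path \<gamma> a b" "\<gamma> a = x" "\<gamma> b = y"
        "\<gamma> ` {a..b} \<subseteq> interior K \<union> {x, y}" and L: "path_length \<gamma> a b \<le> C * norm (x - y)"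
      unfolding joinable_through_interior_def by blast
    have "C * norm (x - y) < C * (\<delta> / (2 * C))"
      using that \<open>C > 0\<close> by (intro mult_strict_left_mono) (auto simp: d_def dist_norm norm_minus_commute)
    also have "\<dots> < \<delta>"
      using \<open>C > 0\<close> \<open>\<delta> > 0\<close> by simp
    finally have "path_length \<gamma> a b < \<delta>"
      using L by linarith
    moreover have "\<forall>z\<in>interior K \<inter> ball x \<delta>. norm (df z - df x) \<le> B"
      using \<delta> interior_subset by (force simp: dist_norm norm_minus_commute)
    ultimately have "\<bar>f y - f x - df x \<bullet> (y - x)\<bar> \<le> B * path_length \<gamma> a b"
      using C1 \<open>x \<in> K\<close> that \<open>B > 0\<close> unfolding C1_int_def
      by (intro remainder_le_path_length[OF _ _ _ _ _ \<gamma>]) auto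
    also have "\<dots> \<le> B * (C * norm (y - x))"
      using L \<open>B > 0\<close> by (simp add: norm_minus_commute)
    also have "\<dots> < \<epsilon> * norm (y - x)"
      using that \<open>\<epsilon> > 0\<close> \<open>C > 0\<close> by (simp add: B_def)
    finally show ?thesis
      using that by (simp add: abs_divide divide_less_eq)
  qed
  ultimately show "\<exists>d>0. \<forall>y\<in>K. 0 < dist y x \<and> dist y x < d \<longrightarrow>
      dist ((f y - f x - df x \<bullet> (y - x)) / norm (y - x)) 0 < \<epsilon>"
    by auto
qed

lemma C1_int_imp_C1_on:
  assumes "closed K"
    and paths: "\<forall>x\<in>frontier K. \<exists>C>0. \<exists>V. open V \<and> x \<in> V \<and>
      (\<forall>y\<in>V \<inter> K. joinable_through_interior K x y (C * norm (x - y)))"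
    and C1: "C1_int K f df"
  shows "C1_on K f df"
  unfolding C1_on_iff_has_derivative_within
proof (intro conjI ballI)
  show "continuous_on K df"
    using C1 by (simp add: C1_int_def)
  fix x assume "x \<in> K"
  show "(f has_derivative (\<lambda>h. df x \<bullet> h)) (at x within K)"
  proof (cases "x \<in> interior K")
    case True
    then show ?thesis
      using C1 by (auto simp: C1_int_def intro: has_derivative_at_withinI)
  next
    case False
    then have "x \<in> frontier K"
      using \<open>x \<in> K\<close> \<open>closed K\<close> by (simp add: frontier_def)
    then show ?thesis
      using paths C1 \<open>x \<in> K\<close> by (metis has_derivative_within_by_short_paths)
  qed
qed

theorem mainTheorem14:
  fixes K :: "'a::euclidean_space set"
  assumes "compact K"
    and "topologically_regular K"
    and "\<forall>x\<in>frontier K. \<exists>C>0. \<exists>V. open V \<and> x \<in> V \<and>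
           (\<forall>y\<in>V \<inter> K. \<exists>\<gamma> a b. rectifiable_path \<gamma> a b \<and> \<gamma> a = x \<and> \<gamma> b = y \<and>
               \<gamma> ` {a..b} \<subseteq> interior K \<union> {x, y} \<and> path_length \<gamma> a b \<le> C * norm (x - y))"
  shows "\<forall>(f :: 'a \<Rightarrow> real) df. C1_int K f df \<longleftrightarrow> C1_on K f df"
  using C1_int_imp_C1_on[OF compact_imp_closed[OF \<open>compact K\<close>]] C1_on_imp_C1_int assms(3)
  unfolding joinable_through_interior_def by blast

end
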